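(* Let $\delta\in(0,1)$. For any $\lambda\in G_\delta$ and any contraction $T$ on a Hilbert space $\mathcal{M}$, the operator $1-\tfrac12\lambda T^*$ is invertible, so that $\lambda_T=(\delta T^*-\tfrac12\lambda)(1-\tfrac12\lambda T^* )^{-1}$ is a well-defined bounded operator on $\mathcal{M}$, and $\|\lambda_T\|<1$. Moreover, for a contraction $T$ on $\mathcal{M}$, the map $G_\delta\to\mathcal{B}(\mathcal{M})$, $\lambda\mapsto\lambda_T$, is holomorphic on $G_\delta$.
   Context: $G_\delta=\{x+iy: x,y\in\mathbb{R},\ \frac{x^2}{(1+\delta)^2}+\frac{y^2}{(1-\delta)^2}<1\}$. *)

theory Defs
  imports "HOL-Analysis.Analysis"
begin

text \<open>Complex Hilbert spaces: the library only has real inner product spaces, so we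
  introduce a class of complex Hilbert spaces.  The inner product is conjugate-linear
  in the first and linear in the second argument, the norm is the one induced by the
  inner product, and the space is complete.\<close>

class chilbert = real_normed_vector + complete_space +
  fixes scaleC :: "complex \<Rightarrow> 'a \<Rightarrow> 'a"
    and cinner :: "'a \<Rightarrow> 'a \<Rightarrow> complex"
  assumes scaleC_add_right: "scaleC c (x + y) = scaleC c x + scaleC c y"
    and scaleC_add_left: "scaleC (b + c) x = scaleC b x + scaleC c x"
    and scaleC_scaleC: "scaleC b (scaleC c x) = scaleC (b * c) x"
    and scaleC_of_real: "scaleC (complex_of_real r) x = scaleR r x"
    and cinner_cnj: "cinner x y = cnj (cinner y x)"
    and cinner_add_left: "cinner (x + y) z = cinner x z + cinner y z"
    and cinner_scaleC_left: "cinner (scaleC c x) y = cnj c * cinner x y"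
    and norm_cinner: "norm x = sqrt (Re (cinner x x))"

text \<open>A bounded operator on the Hilbert space: a bounded (real-)linear map that is
  moreover complex linear.\<close>
definition is_cbounded :: "('a::chilbert \<Rightarrow>\<^sub>L 'a) \<Rightarrow> bool" where
  "is_cbounded T \<longleftrightarrow> (\<forall>c x. blinfun_apply T (scaleC c x) = scaleC c (blinfun_apply T x))"

definition is_contraction :: "('a::chilbert \<Rightarrow>\<^sub>L 'a) \<Rightarrow> bool" where
  "is_contraction T \<longleftrightarrow> is_cbounded T \<and> norm T \<le> 1"

definition adj :: "('a::chilbert \<Rightarrow>\<^sub>L 'a) \<Rightarrow> ('a \<Rightarrow>\<^sub>L 'a)" where
  "adj T = (THE S. \<forall>x y. cinner (blinfun_apply S x) y = cinner x (blinfun_apply T y))"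

definition opscale :: "complex \<Rightarrow> ('a::chilbert \<Rightarrow>\<^sub>L 'a) \<Rightarrow> ('a \<Rightarrow>\<^sub>L 'a)" where
  "opscale c A = Blinfun (\<lambda>x. scaleC c (blinfun_apply A x))"

definition op_invertible :: "('a::chilbert \<Rightarrow>\<^sub>L 'a) \<Rightarrow> bool" where
  "op_invertible A \<longleftrightarrow> (\<exists>B. B o\<^sub>L A = id_blinfun \<and> A o\<^sub>L B = id_blinfun)"

definition op_inv :: "('a::chilbert \<Rightarrow>\<^sub>L 'a) \<Rightarrow> ('a \<Rightarrow>\<^sub>L 'a)" where
  "op_inv A = (THE B. B o\<^sub>L A = id_blinfun \<and> A o\<^sub>L B = id_blinfun)"

definition G :: "real \<Rightarrow> complex set" where
  "G \<delta> = {z. (Re z)\<^sup>2 / (1 + \<delta>)\<^sup>2 + (Im z)\<^sup>2 / (1 - \<delta>)\<^sup>2 < 1}"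

definition lamT :: "real \<Rightarrow> complex \<Rightarrow> ('a::chilbert \<Rightarrow>\<^sub>L 'a) \<Rightarrow> ('a \<Rightarrow>\<^sub>L 'a)" where
  "lamT \<delta> l T = (opscale (complex_of_real \<delta>) (adj T) - opscale (l / 2) id_blinfun)
      o\<^sub>L op_inv (id_blinfun - opscale (l / 2) (adj T))"

definition op_holomorphic_on :: "(complex \<Rightarrow> ('a::chilbert \<Rightarrow>\<^sub>L 'a)) \<Rightarrow> complex set \<Rightarrow> bool" where
  "op_holomorphic_on f S \<longleftrightarrow>
     (\<forall>z\<in>S. \<exists>D. ((\<lambda>w. opscale (inverse (w - z)) (f w - f z)) \<longlongrightarrow> D) (at z))"

end

theory Submission
  imports Defs
begin

text \<open>
  Write A for the adjoint of the contraction T and mu = lambda / 2. Membership of lambda in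
  G_delta is equivalent to 2 |mu - delta cnj mu| < 1 - delta^2 and forces |mu| < (1 + delta) / 2 < 1,
  so 1 - mu A is invertible by the Neumann series. The identity
    ||y - mu A y||^2 - ||delta A y - mu y||^2
      = (1 - |mu|^2) ||y||^2 - (delta^2 - |mu|^2) ||A y||^2 - 2 Re ((mu - delta cnj mu) (y, A y)),
  together with ||A y|| <= ||y|| and the Cauchy-Schwarz inequality, gives a c > 0 with
  ||(delta A - mu) y||^2 + c ||y||^2 <= ||(1 - mu A) y||^2 for all y; substituting
  y = (1 - mu A)^-1 x bounds the norm of lambda_T strictly below 1. Holomorphy follows from the
  resolvent identity, which writes the difference quotient of lambda_T through resolvents that
  depend continuously on lambda. The adjoint comes from the Riesz representation theorem, i.e.
  from the element of minimal norm in a closed affine hyperplane.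
\<close>

section \<open>Complex Hilbert spaces\<close>

lemma scaleC_one [simp]: "scaleC 1 (x::'a::chilbert) = x"
  using scaleC_of_real[of 1 x] by simp

subclass (in chilbert) banach ..

interpretation complex_vs: vector_space "scaleC :: complex \<Rightarrow> 'a::chilbert \<Rightarrow> 'a"
  by unfold_locales (simp_all add: scaleC_add_right scaleC_add_left scaleC_scaleC)

lemma scaleC_scaleR_commute: "scaleC c (scaleR r (x::'a::chilbert)) = scaleR r (scaleC c x)"
  by (simp only: scaleC_of_real[symmetric] scaleC_scaleC mult.commute)

lemma cinner_add_right: "cinner (x::'a::chilbert) (y + z) = cinner x y + cinner x z"
  by (subst (1 2 3) cinner_cnj) (simp add: cinner_add_left)

lemma cinner_scaleC_right: "cinner (x::'a::chilbert) (scaleC c y) = c * cinner x y"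
  by (subst (1 2) cinner_cnj) (simp add: cinner_scaleC_left)

lemma cinner_scaleR_left: "cinner (scaleR r x) (y::'a::chilbert) = of_real r * cinner x y"
  using cinner_scaleC_left[of "of_real r" x y] by (simp add: scaleC_of_real)

lemma cinner_zero_left [simp]: "cinner 0 (y::'a::chilbert) = 0"
  using cinner_scaleR_left[of 0 0 y] by simp

lemma cinner_minus_left: "cinner (- x) (y::'a::chilbert) = - cinner x y"
  using cinner_scaleR_left[of "-1" x y] by simp

lemma cinner_minus_right: "cinner x (- y::'a::chilbert) = - cinner x y"
  by (subst (1 2) cinner_cnj) (simp add: cinner_minus_left)

lemma cinner_diff_left: "cinner (x - z) (y::'a::chilbert) = cinner x y - cinner z y"
  using cinner_add_left[of x "-z" y] by (simp add: cinner_minus_left)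

lemma cinner_diff_right: "cinner x (y - z::'a::chilbert) = cinner x y - cinner x z"
  using cinner_add_right[of x y "-z"] by (simp add: cinner_minus_right)

lemma cinner_self: "cinner x (x::'a::chilbert) = of_real ((norm x)\<^sup>2)"
proof -
  have "Im (cinner x x) = 0"
    using arg_cong[OF cinner_cnj[of x x], where f = Im] by simp
  moreover have "Re (cinner x x) \<ge> 0"
    using norm_cinner[of x] norm_ge_zero[of x] by (metis real_sqrt_lt_0_iff not_le)
  ultimately show ?thesis
    using norm_cinner[of x] by (simp add: complex_eq_iff)
qed

lemma Re_cinner_self: "Re (cinner x x) = (norm (x::'a::chilbert))\<^sup>2"
  by (simp only: cinner_self Re_complex_of_real)

lemma norm_scaleC: "norm (scaleC c (x::'a::chilbert)) = cmod c * norm x"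
proof -
  have "of_real ((norm (scaleC c x))\<^sup>2) = cnj c * c * of_real ((norm x)\<^sup>2)"
    by (simp only: cinner_self[symmetric] cinner_scaleC_left cinner_scaleC_right mult.assoc mult.left_commute)
  also have "\<dots> = of_real ((cmod c * norm x)\<^sup>2)"
    by (simp add: complex_mult_cnj cmod_power2 power_mult_distrib mult.commute)
  finally have "(norm (scaleC c x))\<^sup>2 = (cmod c * norm x)\<^sup>2"
    by (simp only: of_real_eq_iff)
  then show ?thesis
    by (simp add: power2_eq_iff_nonneg)
qed

lemma norm_add_sq:
  "(norm (a + (b::'a::chilbert)))\<^sup>2 = (norm a)\<^sup>2 + (norm b)\<^sup>2 + 2 * Re (cinner a b)"
proof -
  have "of_real ((norm (a + b))\<^sup>2) = cinner a a + cinner b b + cinner a b + cinner b a"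
    by (simp only: cinner_self[symmetric] cinner_add_left cinner_add_right add_ac)
  then have "(norm (a + b))\<^sup>2 = Re (cinner a a + cinner b b + cinner a b + cinner b a)"
    by (metis Re_complex_of_real)
  moreover have "Re (cinner b a) = Re (cinner a b)"
    using arg_cong[OF cinner_cnj[of b a], where f = Re] by simp
  ultimately show ?thesis
    by (simp add: cinner_self)
qed

lemma norm_diff_sq:
  "(norm (a - (b::'a::chilbert)))\<^sup>2 = (norm a)\<^sup>2 + (norm b)\<^sup>2 - 2 * Re (cinner a b)"
  using norm_add_sq[of a "- b"] by (simp add: cinner_minus_right)

lemma parallelogram_law:
  "(norm (a + b))\<^sup>2 + (norm (a - b))\<^sup>2 = 2 * (norm a)\<^sup>2 + 2 * (norm (b::'a::chilbert))\<^sup>2"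
  by (simp add: norm_add_sq norm_diff_sq)

lemma norm_diff_projection_sq:
  fixes u k :: "'a::chilbert"
  assumes "k \<noteq> 0"
  shows "(norm (u - scaleC (cinner k u / of_real ((norm k)\<^sup>2)) k))\<^sup>2
           = (norm u)\<^sup>2 - (cmod (cinner k u))\<^sup>2 / (norm k)\<^sup>2"
proof -
  define t where "t = cinner k u / of_real ((norm k)\<^sup>2)"
  have "t * cinner u k = of_real ((cmod (cinner k u))\<^sup>2 / (norm k)\<^sup>2)"
    unfolding t_def using cinner_cnj[of u k]
    by (simp add: complex_mult_cnj cmod_power2 mult.commute)
  moreover have "cmod t = cmod (cinner k u) / (norm k)\<^sup>2"
    unfolding t_def by (simp add: norm_divide norm_power)
  then have "(cmod t)\<^sup>2 * (norm k)\<^sup>2 = (cmod (cinner k u))\<^sup>2 / (norm k)\<^sup>2"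
    using assms by (simp add: power_divide power2_eq_square)
  ultimately show ?thesis
    unfolding t_def[symmetric]
    by (simp add: norm_diff_sq norm_scaleC cinner_scaleC_right power_mult_distrib)
qed

lemma cmod_cinner_le: "cmod (cinner x y) \<le> norm x * norm (y::'a::chilbert)"
proof (cases "x = 0")
  case True
  then show ?thesis
    by simp
next
  case False
  then have "(cmod (cinner x y))\<^sup>2 / (norm x)\<^sup>2 \<le> (norm y)\<^sup>2"
    using norm_diff_projection_sq[of x y] by (metis diff_ge_0_iff_ge zero_le_power2)
  then have "(cmod (cinner x y))\<^sup>2 \<le> (norm x * norm y)\<^sup>2"
    using False by (simp add: divide_le_eq power_mult_distrib mult.commute)
  then show ?thesis
    by (rule power2_le_imp_le) simp
qed

lemma cinner_eq_0_if_norm_minimal: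
  fixes u k :: "'a::chilbert"
  assumes "\<And>t. norm u \<le> norm (u + scaleC t k)"
  shows "cinner k u = 0"
proof (cases "k = 0")
  case True
  then show ?thesis
    by simp
next
  case False
  define t where "t = - (cinner k u / of_real ((norm k)\<^sup>2))"
  have eq: "u + scaleC t k = u - scaleC (cinner k u / of_real ((norm k)\<^sup>2)) k"
    unfolding t_def using complex_vs.scale_minus_left by simp
  have "(norm u)\<^sup>2 \<le> (norm (u - scaleC (cinner k u / of_real ((norm k)\<^sup>2)) k))\<^sup>2"
    using power_mono[OF assms[of t] norm_ge_zero, of 2] by (simp only: eq)
  then have "(cmod (cinner k u))\<^sup>2 / (norm k)\<^sup>2 \<le> 0"
    using norm_diff_projection_sq[OF False, of u] by linarith
  then show ?thesis
    using False by (simp add: divide_le_0_iff)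
qed

lemma cinner_ext: "(\<And>y. cinner a y = cinner b y) \<Longrightarrow> a = (b::'a::chilbert)"
  using cinner_self[of "a - b"] by (simp add: cinner_diff_left)

lemma bounded_linear_cinner_right: "bounded_linear (cinner (x::'a::chilbert))"
proof (rule bounded_linear_intro[where K = "norm x"])
  show "cinner x (y + z) = cinner x y + cinner x z" for y z
    by (rule cinner_add_right)
  show "cinner x (r *\<^sub>R y) = r *\<^sub>R cinner x y" for r y
    using cinner_scaleC_right[of x "of_real r" y] by (simp add: scaleC_of_real scaleR_conv_of_real)
  show "norm (cinner x y) \<le> norm y * norm x" for y
    using cmod_cinner_le[of x y] by (simp add: mult.commute)
qed

section \<open>Riesz representation and the adjoint\<close>

lemma Cauchy_if_dist_sq_le:
  fixes Y :: "nat \<Rightarrow> 'a::metric_space"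
  assumes "\<And>m n. (dist (Y m) (Y n))\<^sup>2 \<le> e m + e n" and "e \<longlonglongrightarrow> 0"
  shows "Cauchy Y"
proof (rule metric_CauchyI)
  fix \<epsilon> :: real
  assume "0 < \<epsilon>"
  then have "eventually (\<lambda>n. e n < \<epsilon>\<^sup>2 / 2) sequentially"
    using assms(2) by (intro order_tendstoD(2)) auto
  then obtain N where N: "\<And>n. N \<le> n \<Longrightarrow> e n < \<epsilon>\<^sup>2 / 2"
    by (auto simp: eventually_sequentially)
  have "dist (Y m) (Y n) < \<epsilon>" if "N \<le> m" "N \<le> n" for m n
  proof -
    have "(dist (Y m) (Y n))\<^sup>2 < \<epsilon>\<^sup>2"
      using assms(1)[of m n] N[OF that(1)] N[OF that(2)] by linarith
    then show ?thesis
      using \<open>0 < \<epsilon>\<close> by (simp add: power_less_imp_less_base)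
  qed
  then show "\<exists>N. \<forall>m\<ge>N. \<forall>n\<ge>N. dist (Y m) (Y n) < \<epsilon>"
    by blast
qed

lemma dist_sq_le_if_midpoint_norm_ge:
  fixes a b :: "'a::chilbert"
  assumes "d \<le> (norm (scaleR (1/2) (a + b)))\<^sup>2"
  shows "(dist a b)\<^sup>2 \<le> 2 * (norm a)\<^sup>2 + 2 * (norm b)\<^sup>2 - 4 * d"
proof -
  have "4 * d \<le> (norm (a + b))\<^sup>2"
    using assms by (simp add: power2_eq_square)
  then show ?thesis
    unfolding dist_norm using parallelogram_law[of a b] by linarith
qed

lemma closed_midpoint_convex_has_min_norm:
  fixes H :: "'a::chilbert set"
  assumes "H \<noteq> {}" and "closed H"
    and midpoint: "\<And>a b. a \<in> H \<Longrightarrow> b \<in> H \<Longrightarrow> scaleR (1/2) (a + b) \<in> H"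
  obtains u where "u \<in> H" and "\<And>y. y \<in> H \<Longrightarrow> norm u \<le> norm y"
proof -
  define d where "d = Inf ((\<lambda>y. (norm y)\<^sup>2) ` H)"
  have "bdd_below ((\<lambda>y. (norm y)\<^sup>2) ` H)"
    by (rule bdd_belowI[where m = 0]) auto
  then have d_le: "d \<le> (norm y)\<^sup>2" if "y \<in> H" for y
    unfolding d_def using that by (auto intro: cInf_lower)
  have "\<exists>y\<in>H. (norm y)\<^sup>2 < d + inverse (real (Suc n))" for n
    using cInf_lessD[of "(\<lambda>y. (norm y)\<^sup>2) ` H" "d + inverse (real (Suc n))"] assms(1)
    unfolding d_def by auto
  then have "\<forall>n. \<exists>y. y \<in> H \<and> (norm y)\<^sup>2 < d + inverse (real (Suc n))"
    by blast
  then have "\<exists>Y. \<forall>n. Y n \<in> H \<and> (norm (Y n))\<^sup>2 < d + inverse (real (Suc n))"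
    by (rule choice)
  then obtain Y where Y: "\<And>n. Y n \<in> H" "\<And>n. (norm (Y n))\<^sup>2 < d + inverse (real (Suc n))"
    by blast
  have "(dist (Y m) (Y n))\<^sup>2 \<le> 2 * inverse (real (Suc m)) + 2 * inverse (real (Suc n))" for m n
  proof -
    have "(dist (Y m) (Y n))\<^sup>2 \<le> 2 * (norm (Y m))\<^sup>2 + 2 * (norm (Y n))\<^sup>2 - 4 * d"
      by (intro dist_sq_le_if_midpoint_norm_ge d_le midpoint Y(1))
    then show ?thesis
      using Y(2)[of m] Y(2)[of n] by linarith
  qed
  moreover have "(\<lambda>n. 2 * inverse (real (Suc n))) \<longlonglongrightarrow> 0"
    by (rule tendsto_mult_right_zero[OF LIMSEQ_inverse_real_of_nat])
  ultimately have "Cauchy Y"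
    by (rule Cauchy_if_dist_sq_le)
  then obtain u where u: "Y \<longlonglongrightarrow> u"
    unfolding Cauchy_convergent_iff convergent_def by blast
  have "(norm u)\<^sup>2 \<le> d"
  proof (rule LIMSEQ_le)
    show "(\<lambda>n. (norm (Y n))\<^sup>2) \<longlonglongrightarrow> (norm u)\<^sup>2"
      by (intro tendsto_intros u)
    show "(\<lambda>n. d + inverse (real (Suc n))) \<longlonglongrightarrow> d"
      using tendsto_add[OF tendsto_const LIMSEQ_inverse_real_of_nat, of d] by simp
    have "(norm (Y n))\<^sup>2 \<le> d + inverse (real (Suc n))" for n
      using Y(2)[of n] by (rule less_imp_le)
    then show "\<exists>N. \<forall>n\<ge>N. (norm (Y n))\<^sup>2 \<le> d + inverse (real (Suc n))"
      by blast
  qed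
  show ?thesis
  proof (rule that)
    show "u \<in> H"
      using closed_sequentially[OF assms(2) Y(1) u] .
    show "norm u \<le> norm y" if "y \<in> H" for y
    proof (rule power2_le_imp_le)
      show "(norm u)\<^sup>2 \<le> (norm y)\<^sup>2"
        using \<open>(norm u)\<^sup>2 \<le> d\<close> d_le[OF that] by (rule order_trans)
    qed simp
  qed
qed

lemma exists_orthogonal_to_kernel:
  fixes \<phi> :: "'a::chilbert \<Rightarrow> complex"
  assumes bl: "bounded_linear \<phi>" and hom: "\<And>c x. \<phi> (scaleC c x) = c * \<phi> x"
    and "\<phi> y0 \<noteq> 0"
  obtains u where "\<phi> u = 1" and "\<And>k. \<phi> k = 0 \<Longrightarrow> cinner u k = 0"
proof -
  define H where "H = {y. \<phi> y = 1}"
  have lin: "linear \<phi>"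
    using bl by (rule bounded_linear.linear)
  have "scaleC (inverse (\<phi> y0)) y0 \<in> H"
    using \<open>\<phi> y0 \<noteq> 0\<close> by (simp add: H_def hom)
  then have "H \<noteq> {}"
    by blast
  moreover have "closed H"
    unfolding H_def by (intro closed_Collect_eq linear_continuous_on bl continuous_on_const)
  moreover have "scaleR (1/2) (a + b) \<in> H" if "a \<in> H" "b \<in> H" for a b
    using that by (simp add: H_def linear_add[OF lin] linear_scale[OF lin] scaleR_conv_of_real)
  ultimately obtain u where "u \<in> H" and u_min: "\<And>y. y \<in> H \<Longrightarrow> norm u \<le> norm y"
    using closed_midpoint_convex_has_min_norm by blast
  show ?thesis
  proof (rule that)
    show "\<phi> u = 1"
      using \<open>u \<in> H\<close> by (simp add: H_def)
    show "cinner u k = 0" if "\<phi> k = 0" for k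
    proof -
      have "cinner k u = 0"
        using that \<open>u \<in> H\<close> by (intro cinner_eq_0_if_norm_minimal u_min) (simp add: H_def linear_add[OF lin] hom)
      then show ?thesis
        by (subst cinner_cnj) simp
    qed
  qed
qed

lemma riesz_representation:
  fixes \<phi> :: "'a::chilbert \<Rightarrow> complex"
  assumes bl: "bounded_linear \<phi>" and hom: "\<And>c x. \<phi> (scaleC c x) = c * \<phi> x"
  obtains v where "\<And>y. \<phi> y = cinner v y"
proof (cases "\<forall>y. \<phi> y = 0")
  case True
  then show ?thesis
    using that[of 0] by simp
next
  case False
  then obtain u where u: "\<phi> u = 1" and orth: "\<And>k. \<phi> k = 0 \<Longrightarrow> cinner u k = 0"
    using exists_orthogonal_to_kernel[OF bl hom] by blast
  have lin: "linear \<phi>"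
    using bl by (rule bounded_linear.linear)
  have "u \<noteq> 0"
    using u linear_0[OF lin] by auto
  show ?thesis
  proof (rule that)
    fix y
    have "\<phi> (y - scaleC (\<phi> y) u) = 0"
      by (simp add: linear_diff[OF lin] hom u)
    then have "cinner u (y - scaleC (\<phi> y) u) = 0"
      by (rule orth)
    then have "cinner u y = \<phi> y * of_real ((norm u)\<^sup>2)"
      by (simp add: cinner_diff_right cinner_scaleC_right cinner_self)
    then show "\<phi> y = cinner (scaleC (of_real (1 / (norm u)\<^sup>2)) u) y"
      using \<open>u \<noteq> 0\<close> by (simp add: cinner_scaleC_left)
  qed
qed

lemma norm_le_of_cinner_eq:
  fixes T :: "'a::chilbert \<Rightarrow>\<^sub>L 'a"
  assumes "\<And>y. cinner a y = cinner x (T y)"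
  shows "norm a \<le> norm T * norm x"
proof (cases "a = 0")
  case True
  then show ?thesis
    by simp
next
  case False
  have "(norm a)\<^sup>2 = Re (cinner a a)"
    by (rule Re_cinner_self[symmetric])
  also have "\<dots> = Re (cinner x (T a))"
    by (simp only: assms)
  also have "\<dots> \<le> norm x * norm (T a)"
    using complex_Re_le_cmod cmod_cinner_le order_trans by blast
  also have "\<dots> \<le> norm x * (norm T * norm a)"
    by (intro mult_left_mono norm_blinfun) simp
  finally have "norm a * norm a \<le> (norm T * norm x) * norm a"
    by (simp add: power2_eq_square mult_ac)
  then show ?thesis
    using False by simp
qed

lemma adjoint_exists:
  fixes T :: "'a::chilbert \<Rightarrow>\<^sub>L 'a"
  assumes "is_cbounded T"
  obtains S :: "'a \<Rightarrow>\<^sub>L 'a" where "\<And>x y. cinner (S x) y = cinner x (T y)"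
proof -
  have "\<forall>x. \<exists>v. \<forall>y. cinner v y = cinner x (T y)"
  proof
    fix x
    have bl: "bounded_linear (\<lambda>y. cinner x (T y))"
      by (intro bounded_linear_compose[OF bounded_linear_cinner_right] blinfun.bounded_linear_right)
    have hom: "cinner x (T (scaleC c y)) = c * cinner x (T y)" for c y
      using assms by (simp add: is_cbounded_def cinner_scaleC_right)
    obtain v where "\<And>y. cinner x (T y) = cinner v y"
      using riesz_representation[OF bl hom] by blast
    then show "\<exists>v. \<forall>y. cinner v y = cinner x (T y)"
      by (intro exI[of _ v]) simp
  qed
  then have "\<exists>s. \<forall>x y. cinner (s x) y = cinner x (T y)"
    by (rule choice)
  then obtain s where s: "\<And>x y. cinner (s x) y = cinner x (T y)"
    by blast
  have "bounded_linear s"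
  proof (rule bounded_linear_intro[where K = "norm T"])
    show "s (x + y) = s x + s y" for x y
      by (rule cinner_ext) (simp add: s cinner_add_left)
    show "s (r *\<^sub>R x) = r *\<^sub>R s x" for r x
      by (rule cinner_ext) (simp add: s cinner_scaleR_left)
    show "norm (s x) \<le> norm x * norm T" for x
      using norm_le_of_cinner_eq[OF s] by (simp add: mult.commute)
  qed
  then show ?thesis
    using that[of "Blinfun s"] by (simp add: bounded_linear_Blinfun_apply s)
qed

lemma cinner_adj:
  fixes T :: "'a::chilbert \<Rightarrow>\<^sub>L 'a"
  assumes "is_cbounded T"
  shows "cinner (adj T x) y = cinner x (T y)"
proof -
  have "\<exists>!S. \<forall>x y. cinner (blinfun_apply S x) y = cinner x (T y)"
  proof (rule ex_ex1I)
    obtain S :: "'a \<Rightarrow>\<^sub>L 'a" where "\<And>x y. cinner (S x) y = cinner x (T y)"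
      using adjoint_exists[OF assms] by blast
    then show "\<exists>S. \<forall>x y. cinner (blinfun_apply S x) y = cinner x (T y)"
      by blast
  next
    fix S1 S2 :: "'a \<Rightarrow>\<^sub>L 'a"
    assume "\<forall>x y. cinner (S1 x) y = cinner x (T y)" "\<forall>x y. cinner (S2 x) y = cinner x (T y)"
    then show "S1 = S2"
      by (intro blinfun_eqI cinner_ext) simp
  qed
  from theI'[OF this] show ?thesis
    unfolding adj_def by blast
qed

lemma is_cbounded_adj:
  assumes "is_cbounded T"
  shows "is_cbounded (adj T)"
  unfolding is_cbounded_def
proof (intro allI cinner_ext)
  fix c x y
  show "cinner (adj T (scaleC c x)) y = cinner (scaleC c (adj T x)) y"
    by (simp only: cinner_adj[OF assms] cinner_scaleC_left)
qed

lemma norm_adj_le: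
  assumes "is_cbounded T"
  shows "norm (adj T) \<le> norm T"
proof (rule norm_blinfun_bound)
  show "norm (adj T x) \<le> norm T * norm x" for x
    by (rule norm_le_of_cinner_eq) (rule cinner_adj[OF assms])
qed simp

lemma is_contraction_adj: "is_contraction T \<Longrightarrow> is_contraction (adj T)"
  unfolding is_contraction_def using is_cbounded_adj norm_adj_le order_trans by blast

section \<open>Bounded operators\<close>

lemma bounded_linear_scaleC_apply:
  "bounded_linear (\<lambda>x. scaleC c (blinfun_apply (A::'a::chilbert \<Rightarrow>\<^sub>L 'a) x))"
proof (rule bounded_linear_intro[where K = "cmod c * norm A"])
  show "scaleC c (A (x + y)) = scaleC c (A x) + scaleC c (A y)" for x y
    by (simp add: blinfun.add_right scaleC_add_right)
  show "scaleC c (A (r *\<^sub>R x)) = r *\<^sub>R scaleC c (A x)" for r x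
    by (simp add: blinfun.scaleR_right scaleC_scaleR_commute)
  show "norm (scaleC c (A x)) \<le> norm x * (cmod c * norm A)" for x
    using mult_left_mono[OF norm_blinfun[of A x], of "cmod c"] by (simp add: norm_scaleC mult_ac)
qed

lemma opscale_apply [simp]: "opscale c A x = scaleC c (A x)"
  unfolding opscale_def by (simp add: bounded_linear_Blinfun_apply[OF bounded_linear_scaleC_apply])

lemma opscale_opscale: "opscale a (opscale b A) = opscale (a * b) A"
  by (rule blinfun_eqI) (simp add: scaleC_scaleC)

lemma opscale_of_real: "opscale (of_real r) A = scaleR r A"
  by (rule blinfun_eqI) (simp add: scaleC_of_real scaleR_blinfun.rep_eq)

lemma norm_opscale_le: "norm (opscale c (A::'a::chilbert \<Rightarrow>\<^sub>L 'a)) \<le> cmod c * norm A"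
  by (rule norm_blinfun_bound)
    (auto simp: norm_scaleC mult.assoc intro!: mult_left_mono norm_blinfun)

lemma is_cbounded_id: "is_cbounded (id_blinfun :: 'a::chilbert \<Rightarrow>\<^sub>L 'a)"
  by (simp add: is_cbounded_def)

lemma is_cbounded_opscale: "is_cbounded A \<Longrightarrow> is_cbounded (opscale c A)"
  by (simp add: is_cbounded_def scaleC_scaleC mult.commute)

lemma is_cbounded_diff: "is_cbounded A \<Longrightarrow> is_cbounded B \<Longrightarrow> is_cbounded (A - B)"
  by (simp add: is_cbounded_def minus_blinfun.rep_eq complex_vs.scale_right_diff_distrib)

lemma is_cbounded_compose: "is_cbounded A \<Longrightarrow> is_cbounded B \<Longrightarrow> is_cbounded (A o\<^sub>L B)"
  by (simp add: is_cbounded_def)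

lemma norm_diff_apply_ge:
  fixes M :: "'a::real_normed_vector \<Rightarrow>\<^sub>L 'a"
  shows "(1 - norm M) * norm x \<le> norm (x - M x)"
  using norm_triangle_ineq2[of x "M x"] norm_blinfun[of M x] by (simp add: algebra_simps)

lemma surj_id_minus_blinfun:
  fixes M :: "'a::banach \<Rightarrow>\<^sub>L 'a"
  assumes "norm M < 1"
  shows "surj (\<lambda>x. x - M x)"
proof -
  have "\<exists>x. y = x - M x" for y
  proof -
    have "\<exists>!x. y + M x = x"
      by (rule banach_fix_type[where c = "norm M"])
        (use assms in \<open>auto simp: dist_norm blinfun.diff_right[symmetric] norm_blinfun\<close>)
    then obtain x where "y + M x = x"
      by blast
    then show ?thesis
      by (intro exI[of _ x]) (simp add: algebra_simps)
  qed
  then show ?thesis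
    by (simp add: surj_def)
qed

lemma bounded_linear_inv_if_bounded_below:
  fixes f :: "'a::real_normed_vector \<Rightarrow> 'b::real_normed_vector"
  assumes "linear f" and "surj f" and "0 < k" and below: "\<And>x. k * norm x \<le> norm (f x)"
  shows "inj f" and "bounded_linear (inv f)" and "norm (inv f y) \<le> norm y / k"
proof -
  show "inj f"
  proof (rule injI)
    fix x y
    assume "f x = f y"
    then have "k * norm (x - y) \<le> 0"
      using below[of "x - y"] by (simp add: linear_diff[OF assms(1)])
    then show "x = y"
      using assms(3) by (simp add: mult_le_0_iff)
  qed
  have f_inv: "f (inv f y) = y" for y
    using assms(2) by (rule surj_f_inv_f)
  have bound: "norm (inv f y) \<le> norm y / k" for y
    using below[of "inv f y"] assms(3) by (simp add: f_inv field_simps)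
  then show "norm (inv f y) \<le> norm y / k" .
  show "bounded_linear (inv f)"
  proof (rule bounded_linear_intro[where K = "1 / k"])
    show "inv f (a + b) = inv f a + inv f b" for a b
      using \<open>inj f\<close> by (rule injD) (simp add: f_inv linear_add[OF assms(1)])
    show "inv f (r *\<^sub>R a) = r *\<^sub>R inv f a" for r a
      using \<open>inj f\<close> by (rule injD) (simp add: f_inv linear_scale[OF assms(1)])
    show "norm (inv f y) \<le> norm y * (1 / k)" for y
      using bound[of y] by simp
  qed
qed

lemma id_minus_blinfun_invertible:
  fixes M :: "'a::banach \<Rightarrow>\<^sub>L 'a"
  assumes "norm M < 1"
  obtains B where "B o\<^sub>L (id_blinfun - M) = id_blinfun" and "(id_blinfun - M) o\<^sub>L B = id_blinfun"
    and "norm B \<le> 1 / (1 - norm M)"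
proof -
  let ?f = "blinfun_apply (id_blinfun - M)"
  have "linear ?f"
    by (rule bounded_linear.linear[OF blinfun.bounded_linear_right])
  moreover have "surj ?f"
    using surj_id_minus_blinfun[OF assms] by (simp add: blinfun.diff_left)
  moreover have "0 < 1 - norm M"
    using assms by simp
  moreover have "(1 - norm M) * norm x \<le> norm (?f x)" for x
    using norm_diff_apply_ge[of M x] by (simp add: blinfun.diff_left)
  ultimately have inj: "inj ?f" and bl: "bounded_linear (inv ?f)"
    and bound: "\<And>y. norm (inv ?f y) \<le> norm y / (1 - norm M)"
    by (rule bounded_linear_inv_if_bounded_below)+
  show ?thesis
  proof (rule that)
    show "Blinfun (inv ?f) o\<^sub>L (id_blinfun - M) = id_blinfun"
      by (rule blinfun_eqI) (simp add: bounded_linear_Blinfun_apply[OF bl] inv_f_f[OF inj])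
    show "(id_blinfun - M) o\<^sub>L Blinfun (inv ?f) = id_blinfun"
      by (rule blinfun_eqI)
        (simp add: bounded_linear_Blinfun_apply[OF bl] surj_f_inv_f[OF \<open>surj ?f\<close>])
    show "norm (Blinfun (inv ?f)) \<le> 1 / (1 - norm M)"
      by (rule norm_blinfun_bound)
        (use \<open>0 < 1 - norm M\<close> bound in \<open>simp_all add: bounded_linear_Blinfun_apply[OF bl]\<close>)
  qed
qed

lemma op_inv_eqI:
  fixes A B :: "'a::chilbert \<Rightarrow>\<^sub>L 'a"
  assumes "B o\<^sub>L A = id_blinfun" and "A o\<^sub>L B = id_blinfun"
  shows "op_inv A = B"
  unfolding op_inv_def
proof (rule the_equality)
  fix B'
  assume B': "B' o\<^sub>L A = id_blinfun \<and> A o\<^sub>L B' = id_blinfun"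
  show "B' = B"
  proof (rule blinfun_eqI)
    fix y
    have "B' y = B' (A (B y))"
      using arg_cong[OF assms(2), of "\<lambda>F. F y"] by simp
    also have "\<dots> = B y"
      using arg_cong[OF conjunct1[OF B'], of "\<lambda>F. F (B y)"] by simp
    finally show "B' y = B y" .
  qed
qed (use assms in simp)


section \<open>The resolvent\<close>

text \<open>Fredholm's resolvent (1 - mu A)^-1. It is a genuine inverse only when cmod mu * norm A < 1;
  otherwise op_inv returns an unspecified operator.\<close>

abbreviation resolvent :: "complex \<Rightarrow> ('a::chilbert \<Rightarrow>\<^sub>L 'a) \<Rightarrow> ('a \<Rightarrow>\<^sub>L 'a)" where
  "resolvent \<mu> A \<equiv> op_inv (id_blinfun - opscale \<mu> A)"

lemma resolvent_inverse:
  fixes A :: "'a::chilbert \<Rightarrow>\<^sub>L 'a"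
  assumes "cmod \<mu> * norm A < 1"
  shows "resolvent \<mu> A o\<^sub>L (id_blinfun - opscale \<mu> A) = id_blinfun"
    and "(id_blinfun - opscale \<mu> A) o\<^sub>L resolvent \<mu> A = id_blinfun"
    and "norm (resolvent \<mu> A) \<le> 1 / (1 - cmod \<mu> * norm A)"
proof -
  have M: "norm (opscale \<mu> A) < 1"
    using norm_opscale_le assms by (rule le_less_trans)
  obtain B where B: "B o\<^sub>L (id_blinfun - opscale \<mu> A) = id_blinfun"
      "(id_blinfun - opscale \<mu> A) o\<^sub>L B = id_blinfun" "norm B \<le> 1 / (1 - norm (opscale \<mu> A))"
    using id_minus_blinfun_invertible[OF M] by blast
  have R: "resolvent \<mu> A = B"
    using B(1,2) by (rule op_inv_eqI)
  show "resolvent \<mu> A o\<^sub>L (id_blinfun - opscale \<mu> A) = id_blinfun"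
    and "(id_blinfun - opscale \<mu> A) o\<^sub>L resolvent \<mu> A = id_blinfun"
    using B(1,2) by (simp_all only: R)
  have "1 / (1 - norm (opscale \<mu> A)) \<le> 1 / (1 - cmod \<mu> * norm A)"
    using norm_opscale_le[of \<mu> A] assms M by (intro divide_left_mono mult_pos_pos) auto
  then show "norm (resolvent \<mu> A) \<le> 1 / (1 - cmod \<mu> * norm A)"
    using B(3) R by simp
qed

lemma op_invertible_id_minus_opscale:
  fixes A :: "'a::chilbert \<Rightarrow>\<^sub>L 'a"
  shows "cmod \<mu> * norm A < 1 \<Longrightarrow> op_invertible (id_blinfun - opscale \<mu> A)"
  unfolding op_invertible_def using resolvent_inverse(1,2) by blast

lemma resolvent_apply_left:
  fixes A :: "'a::chilbert \<Rightarrow>\<^sub>L 'a"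
  shows "cmod \<mu> * norm A < 1 \<Longrightarrow> resolvent \<mu> A (x - scaleC \<mu> (A x)) = x"
  using arg_cong[OF resolvent_inverse(1), of \<mu> A "\<lambda>F. F x"] by (simp add: minus_blinfun.rep_eq)

lemma resolvent_apply_right:
  fixes A :: "'a::chilbert \<Rightarrow>\<^sub>L 'a"
  shows "cmod \<mu> * norm A < 1 \<Longrightarrow> resolvent \<mu> A y - scaleC \<mu> (A (resolvent \<mu> A y)) = y"
  using arg_cong[OF resolvent_inverse(2), of \<mu> A "\<lambda>F. F y"] by (simp add: minus_blinfun.rep_eq)

lemma is_cbounded_resolvent:
  fixes A :: "'a::chilbert \<Rightarrow>\<^sub>L 'a"
  assumes "is_cbounded A" and "cmod \<mu> * norm A < 1"
  shows "is_cbounded (resolvent \<mu> A)"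
  unfolding is_cbounded_def
proof (intro allI)
  fix c y
  let ?R = "resolvent \<mu> A"
  have "scaleC c (?R y) - scaleC \<mu> (A (scaleC c (?R y))) = scaleC c (?R y - scaleC \<mu> (A (?R y)))"
    using assms(1)
    by (simp add: is_cbounded_def complex_vs.scale_right_diff_distrib scaleC_scaleC mult.commute)
  also have "\<dots> = scaleC c y"
    by (simp only: resolvent_apply_right[OF assms(2)])
  finally show "?R (scaleC c y) = scaleC c (?R y)"
    using resolvent_apply_left[OF assms(2), of "scaleC c (?R y)"] by simp
qed

lemma resolvent_diff:
  fixes A :: "'a::chilbert \<Rightarrow>\<^sub>L 'a"
  assumes "is_cbounded A" and \<mu>: "cmod \<mu> * norm A < 1" and \<nu>: "cmod \<nu> * norm A < 1"
  shows "resolvent \<mu> A - resolvent \<nu> A = opscale (\<mu> - \<nu>) (resolvent \<mu> A o\<^sub>L A o\<^sub>L resolvent \<nu> A)"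
proof (rule blinfun_eqI)
  fix x
  define p where "p = resolvent \<nu> A x"
  have "x = (p - scaleC \<mu> (A p)) + scaleC (\<mu> - \<nu>) (A p)"
    using resolvent_apply_right[OF \<nu>, of x]
    by (simp add: p_def algebra_simps)
  then have "resolvent \<mu> A x = p + scaleC (\<mu> - \<nu>) (resolvent \<mu> A (A p))"
    using is_cbounded_resolvent[OF assms(1) \<mu>]
    by (simp add: blinfun.add_right resolvent_apply_left[OF \<mu>] is_cbounded_def)
  then show "(resolvent \<mu> A - resolvent \<nu> A) x
      = opscale (\<mu> - \<nu>) (resolvent \<mu> A o\<^sub>L A o\<^sub>L resolvent \<nu> A) x"
    by (simp add: minus_blinfun.rep_eq p_def)
qed

lemma norm_resolvent_diff_le:
  fixes A :: "'a::chilbert \<Rightarrow>\<^sub>L 'a"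
  assumes "is_cbounded A" and "cmod \<mu> * norm A < 1" and "cmod \<nu> * norm A < 1"
  shows "norm (resolvent \<mu> A - resolvent \<nu> A)
    \<le> cmod (\<mu> - \<nu>) * (norm (resolvent \<mu> A) * norm A * norm (resolvent \<nu> A))"
proof -
  have "norm (resolvent \<mu> A - resolvent \<nu> A)
      \<le> cmod (\<mu> - \<nu>) * norm (resolvent \<mu> A o\<^sub>L A o\<^sub>L resolvent \<nu> A)"
    unfolding resolvent_diff[OF assms] by (rule norm_opscale_le)
  also have "\<dots> \<le> cmod (\<mu> - \<nu>) * (norm (resolvent \<mu> A) * norm A * norm (resolvent \<nu> A))"
    by (intro mult_left_mono norm_ge_zero order_trans[OF norm_blinfun_compose]
        mult_right_mono norm_blinfun_compose)
  finally show ?thesis .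
qed

lemma isCont_resolvent:
  fixes A :: "'a::chilbert \<Rightarrow>\<^sub>L 'a"
  assumes "is_cbounded A" and "cmod \<nu> * norm A < 1"
  shows "isCont (\<lambda>\<mu>. resolvent \<mu> A) \<nu>"
proof -
  define \<rho> where "\<rho> = (1 + cmod \<nu> * norm A) / 2"
  have "\<rho> < 1" "cmod \<nu> * norm A < \<rho>"
    using assms(2) by (simp_all add: \<rho>_def)
  have "((\<lambda>\<mu>. cmod \<mu> * norm A) \<longlongrightarrow> cmod \<nu> * norm A) (at \<nu>)"
    by (intro tendsto_intros)
  then have near: "eventually (\<lambda>\<mu>. cmod \<mu> * norm A < \<rho>) (at \<nu>)"
    using \<open>cmod \<nu> * norm A < \<rho>\<close> by (rule order_tendstoD(2))
  define C where "C = norm A * norm (resolvent \<nu> A) / (1 - \<rho>)"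
  have lipschitz: "norm (resolvent \<mu> A - resolvent \<nu> A) \<le> C * cmod (\<mu> - \<nu>)"
    if "cmod \<mu> * norm A < \<rho>" for \<mu>
  proof -
    have \<mu>: "cmod \<mu> * norm A < 1"
      using that \<open>\<rho> < 1\<close> by linarith
    have "norm (resolvent \<mu> A) \<le> 1 / (1 - cmod \<mu> * norm A)"
      by (rule resolvent_inverse(3)[OF \<mu>])
    also have "\<dots> \<le> 1 / (1 - \<rho>)"
      using that \<open>\<rho> < 1\<close> by (intro divide_left_mono mult_pos_pos) auto
    finally have "norm (resolvent \<mu> A) \<le> 1 / (1 - \<rho>)" .
    then have "cmod (\<mu> - \<nu>) * (norm (resolvent \<mu> A) * norm A * norm (resolvent \<nu> A))
        \<le> cmod (\<mu> - \<nu>) * (1 / (1 - \<rho>) * norm A * norm (resolvent \<nu> A))"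
      by (intro mult_left_mono mult_right_mono) auto
    with norm_resolvent_diff_le[OF assms(1) \<mu> assms(2)] show ?thesis
      by (simp add: C_def mult_ac)
  qed
  have "((\<lambda>\<mu>. resolvent \<mu> A - resolvent \<nu> A) \<longlongrightarrow> 0) (at \<nu>)"
  proof (rule Lim_null_comparison)
    show "eventually (\<lambda>\<mu>. norm (resolvent \<mu> A - resolvent \<nu> A) \<le> C * cmod (\<mu> - \<nu>)) (at \<nu>)"
      using near by (rule eventually_mono) (rule lipschitz)
    show "((\<lambda>\<mu>. C * cmod (\<mu> - \<nu>)) \<longlongrightarrow> 0) (at \<nu>)"
      by (auto intro!: tendsto_eq_intros)
  qed
  then show ?thesis
    unfolding isCont_def by (simp add: Lim_null[symmetric])
qed

section \<open>The norm estimate\<close>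

lemma mem_G_iff:
  fixes \<delta> :: real
  assumes "0 < \<delta>" and "\<delta> < 1"
  shows "l \<in> G \<delta> \<longleftrightarrow> cmod (l - of_real \<delta> * cnj l) < 1 - \<delta>\<^sup>2"
proof -
  define Q where "Q = (1 - \<delta>)\<^sup>2 * (Re l)\<^sup>2 + (1 + \<delta>)\<^sup>2 * (Im l)\<^sup>2"
  have pos: "0 < (1 + \<delta>)\<^sup>2" "0 < (1 - \<delta>)\<^sup>2" "0 < 1 - \<delta>\<^sup>2"
    using assms by (auto simp: power_less_one_iff)
  have "(Re l)\<^sup>2 / (1 + \<delta>)\<^sup>2 + (Im l)\<^sup>2 / (1 - \<delta>)\<^sup>2 = Q / (1 - \<delta>\<^sup>2)\<^sup>2"
    using pos unfolding Q_def by (simp add: field_simps power2_eq_square)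
  then have "l \<in> G \<delta> \<longleftrightarrow> Q < (1 - \<delta>\<^sup>2)\<^sup>2"
    using pos by (simp add: G_def)
  also have "Q = (cmod (l - of_real \<delta> * cnj l))\<^sup>2"
    unfolding Q_def cmod_power2 by (simp add: power2_eq_square algebra_simps)
  also have "(cmod (l - of_real \<delta> * cnj l))\<^sup>2 < (1 - \<delta>\<^sup>2)\<^sup>2 \<longleftrightarrow> cmod (l - of_real \<delta> * cnj l) < 1 - \<delta>\<^sup>2"
    using pos(3) by (auto intro: power_strict_mono dest: power2_less_imp_less)
  finally show ?thesis .
qed

lemma norm_lt_of_mem_G:
  fixes \<delta> :: real
  assumes "0 < \<delta>" and "\<delta> < 1" and "l \<in> G \<delta>"
  shows "cmod l < 1 + \<delta>"
proof -
  have "(1 - \<delta>) * cmod l = cmod l - cmod (of_real \<delta> * cnj l)"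
    using assms(1) by (simp add: norm_mult algebra_simps)
  also have "\<dots> \<le> cmod (l - of_real \<delta> * cnj l)"
    by (rule norm_triangle_ineq2)
  also have "\<dots> < (1 - \<delta>) * (1 + \<delta>)"
    using assms by (simp add: mem_G_iff power2_eq_square algebra_simps)
  finally show ?thesis
    using assms(2) by simp
qed

lemma norm_half_mult_lt_1_of_mem_G:
  fixes \<delta> :: real and A :: "'a::real_normed_vector \<Rightarrow>\<^sub>L 'a"
  assumes "0 < \<delta>" and "\<delta> < 1" and "l \<in> G \<delta>" and "norm A \<le> 1"
  shows "cmod (l / 2) * norm A < 1"
proof -
  have "cmod (l / 2) < 1"
    using norm_lt_of_mem_G[OF assms(1-3)] assms(2) by (simp add: norm_divide)
  then show ?thesis
    using assms(4) by (meson le_less_trans mult_left_le norm_ge_zero)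
qed

lemma quadratic_lower_bound:
  fixes \<alpha> \<beta> m R Y X :: real
  assumes "0 \<le> R" and "R \<le> Y" and "X \<le> m * R * Y"
  shows "min (min \<alpha> (\<alpha> + \<beta>)) (\<alpha> - \<beta> - 2 * m) * Y\<^sup>2 \<le> \<alpha> * Y\<^sup>2 - \<beta> * R\<^sup>2 - 2 * X"
proof -
  \<comment> \<open>For X = m R Y the right-hand side is (Y - R) (alpha Y + beta R) + (alpha - beta - 2 m) R Y,
    and alpha Y + beta R is a convex combination of alpha Y and (alpha + beta) Y.\<close>
  define c where "c = min (min \<alpha> (\<alpha> + \<beta>)) (\<alpha> - \<beta> - 2 * m)"
  have "c * (Y - R) \<le> \<alpha> * (Y - R)" and "c * R \<le> (\<alpha> + \<beta>) * R"
    using assms(1,2) by (auto simp: c_def intro!: mult_right_mono)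
  then have "c * Y * (Y - R) \<le> (\<alpha> * (Y - R) + (\<alpha> + \<beta>) * R) * (Y - R)"
    using assms(2) by (intro mult_right_mono) (auto simp: algebra_simps)
  moreover have "c * R * Y \<le> (\<alpha> - \<beta> - 2 * m) * R * Y"
    using assms(1,2) by (auto simp: c_def intro!: mult_right_mono)
  moreover have "c * Y\<^sup>2 = c * Y * (Y - R) + c * R * Y"
    by (simp add: power2_eq_square algebra_simps)
  moreover have "\<alpha> * Y\<^sup>2 - \<beta> * R\<^sup>2 - 2 * (m * R * Y)
      = (\<alpha> * (Y - R) + (\<alpha> + \<beta>) * R) * (Y - R) + (\<alpha> - \<beta> - 2 * m) * R * Y"
    by (simp add: power2_eq_square algebra_simps)
  ultimately show ?thesis
    using assms(3) unfolding c_def[symmetric] by linarith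
qed

lemma norm_diff_sq_sub_norm_diff_sq:
  fixes u v :: "'a::chilbert" and \<delta> :: real
  shows "(norm (u - scaleC \<mu> v))\<^sup>2 - (norm (scaleC (of_real \<delta>) v - scaleC \<mu> u))\<^sup>2
    = (1 - (cmod \<mu>)\<^sup>2) * (norm u)\<^sup>2 - (\<delta>\<^sup>2 - (cmod \<mu>)\<^sup>2) * (norm v)\<^sup>2
      - 2 * Re ((\<mu> - of_real \<delta> * cnj \<mu>) * cinner u v)"
proof -
  have "cinner v u = cnj (cinner u v)"
    by (rule cinner_cnj)
  then show ?thesis
    by (simp add: norm_diff_sq norm_scaleC cinner_scaleC_left cinner_scaleC_right power_mult_distrib
        cmod_power2 algebra_simps)
qed


lemma norm_sq_gap:
  fixes A :: "'a::chilbert \<Rightarrow>\<^sub>L 'a" and \<mu> :: complex and \<delta> :: real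
  assumes "norm A \<le> 1"
  defines "c \<equiv> min (min (1 - (cmod \<mu>)\<^sup>2) (1 + \<delta>\<^sup>2 - 2 * (cmod \<mu>)\<^sup>2))
                (1 - \<delta>\<^sup>2 - 2 * cmod (\<mu> - of_real \<delta> * cnj \<mu>))"
  shows "(norm (scaleC (of_real \<delta>) (A y) - scaleC \<mu> y))\<^sup>2 + c * (norm y)\<^sup>2
    \<le> (norm (y - scaleC \<mu> (A y)))\<^sup>2"
proof -
  define m where "m = cmod (\<mu> - of_real \<delta> * cnj \<mu>)"
  define \<alpha> where "\<alpha> = 1 - (cmod \<mu>)\<^sup>2"
  define \<beta> where "\<beta> = \<delta>\<^sup>2 - (cmod \<mu>)\<^sup>2"
  have "cmod (cinner y (A y)) \<le> norm (A y) * norm y"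
    using cmod_cinner_le[of y "A y"] by (simp add: mult.commute)
  then have "cmod ((\<mu> - of_real \<delta> * cnj \<mu>) * cinner y (A y)) \<le> m * (norm (A y) * norm y)"
    unfolding m_def norm_mult by (rule mult_left_mono) simp
  then have "Re ((\<mu> - of_real \<delta> * cnj \<mu>) * cinner y (A y)) \<le> m * norm (A y) * norm y"
    unfolding mult.assoc by (rule order_trans[OF complex_Re_le_cmod])
  moreover have "norm (A y) \<le> norm y"
    using norm_blinfun[of A y] mult_right_mono[OF assms(1) norm_ge_zero[of y]] by simp
  ultimately have "min (min \<alpha> (\<alpha> + \<beta>)) (\<alpha> - \<beta> - 2 * m) * (norm y)\<^sup>2
      \<le> \<alpha> * (norm y)\<^sup>2 - \<beta> * (norm (A y))\<^sup>2 - 2 * Re ((\<mu> - of_real \<delta> * cnj \<mu>) * cinner y (A y))"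
    by (intro quadratic_lower_bound norm_ge_zero)
  moreover have "min (min \<alpha> (\<alpha> + \<beta>)) (\<alpha> - \<beta> - 2 * m) = c"
    by (simp add: \<alpha>_def \<beta>_def m_def c_def)
  ultimately show ?thesis
    using norm_diff_sq_sub_norm_diff_sq[of y \<mu> "A y" \<delta>] by (simp add: \<alpha>_def \<beta>_def)
qed

lemma norm_sq_gap_pos_of_mem_G:
  fixes \<delta> :: real and l :: complex
  assumes "0 < \<delta>" and "\<delta> < 1" and "l \<in> G \<delta>"
  defines "\<mu> \<equiv> l / 2"
  shows "0 < min (min (1 - (cmod \<mu>)\<^sup>2) (1 + \<delta>\<^sup>2 - 2 * (cmod \<mu>)\<^sup>2))
                (1 - \<delta>\<^sup>2 - 2 * cmod (\<mu> - of_real \<delta> * cnj \<mu>))"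
proof -
  have "l - of_real \<delta> * cnj l = 2 * (\<mu> - of_real \<delta> * cnj \<mu>)"
    by (simp add: \<mu>_def algebra_simps)
  then have "2 * cmod (\<mu> - of_real \<delta> * cnj \<mu>) = cmod (l - of_real \<delta> * cnj l)"
    by (simp only: norm_mult) simp
  then have "2 * cmod (\<mu> - of_real \<delta> * cnj \<mu>) < 1 - \<delta>\<^sup>2"
    using assms(3) mem_G_iff[OF assms(1,2)] by simp
  moreover have "cmod \<mu> < (1 + \<delta>) / 2"
    using norm_lt_of_mem_G[OF assms(1-3)] by (simp add: \<mu>_def norm_divide)
  then have "(cmod \<mu>)\<^sup>2 < ((1 + \<delta>) / 2)\<^sup>2"
    by (simp add: power_strict_mono)
  moreover have "((1 + \<delta>) / 2)\<^sup>2 < 1"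
    using power_strict_mono[of "(1 + \<delta>) / 2" 1 2] assms(1,2) by simp
  moreover have "1 + \<delta>\<^sup>2 - 2 * ((1 + \<delta>) / 2)\<^sup>2 = (1 - \<delta>)\<^sup>2 / 2"
    by (simp add: power2_eq_square field_simps)
  then have "2 * ((1 + \<delta>) / 2)\<^sup>2 \<le> 1 + \<delta>\<^sup>2"
    using zero_le_power2[of "1 - \<delta>"] by linarith
  ultimately show ?thesis
    by auto
qed

lemma norm_compose_lt_1_if_gap:
  fixes B E R :: "'a::real_normed_vector \<Rightarrow>\<^sub>L 'a"
  assumes "B o\<^sub>L R = id_blinfun" and "0 < b" and "0 < c"
    and B: "\<And>y. norm (B y) \<le> b * norm y"
    and gap: "\<And>y. (norm (E y))\<^sup>2 + c * (norm y)\<^sup>2 \<le> (norm (B y))\<^sup>2"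
  shows "norm (E o\<^sub>L R) < 1"
proof -
  define \<kappa> where "\<kappa> = min 1 (c / b\<^sup>2)"
  have "0 < \<kappa>" "\<kappa> \<le> 1"
    using assms(2,3) by (simp_all add: \<kappa>_def)
  have "\<kappa> * b\<^sup>2 \<le> c / b\<^sup>2 * b\<^sup>2"
    using assms(2) by (intro mult_right_mono) (simp_all add: \<kappa>_def)
  then have "\<kappa> * b\<^sup>2 \<le> c"
    using assms(2) by simp
  have "norm (E o\<^sub>L R) \<le> sqrt (1 - \<kappa>)"
  proof (rule norm_blinfun_bound)
    show "0 \<le> sqrt (1 - \<kappa>)"
      using \<open>\<kappa> \<le> 1\<close> by simp
    fix z
    have z: "B (R z) = z"
      using arg_cong[OF assms(1), of "\<lambda>F. F z"] by simp
    have "(norm z)\<^sup>2 \<le> (b * norm (R z))\<^sup>2"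
      using power_mono[OF B[of "R z"] norm_ge_zero, of 2] by (simp only: z)
    then have "\<kappa> * (norm z)\<^sup>2 \<le> \<kappa> * (b * norm (R z))\<^sup>2"
      using \<open>0 < \<kappa>\<close> by (intro mult_left_mono) simp_all
    also have "\<dots> = \<kappa> * b\<^sup>2 * (norm (R z))\<^sup>2"
      by (simp only: power_mult_distrib mult.assoc)
    also have "\<dots> \<le> c * (norm (R z))\<^sup>2"
      using \<open>\<kappa> * b\<^sup>2 \<le> c\<close> by (intro mult_right_mono) simp_all
    finally have "(norm (E (R z)))\<^sup>2 \<le> (norm z)\<^sup>2 - \<kappa> * (norm z)\<^sup>2"
      using gap[of "R z"] unfolding z by linarith
    also have "\<dots> = (1 - \<kappa>) * (norm z)\<^sup>2"
      by (simp only: left_diff_distrib mult_1)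
    also have "\<dots> = (sqrt (1 - \<kappa>) * norm z)\<^sup>2"
      using \<open>\<kappa> \<le> 1\<close> by (simp add: power_mult_distrib)
    finally have "(norm (E (R z)))\<^sup>2 \<le> (sqrt (1 - \<kappa>) * norm z)\<^sup>2" .
    then show "norm ((E o\<^sub>L R) z) \<le> sqrt (1 - \<kappa>) * norm z"
      unfolding blinfun_apply_blinfun_compose
      by (rule power2_le_imp_le) (use \<open>\<kappa> \<le> 1\<close> in simp)
  qed
  also have "sqrt (1 - \<kappa>) < 1"
    using \<open>0 < \<kappa>\<close> by simp
  finally show ?thesis .
qed

lemma norm_compose_resolvent_lt_1:
  fixes A :: "'a::chilbert \<Rightarrow>\<^sub>L 'a" and \<delta> :: real
  assumes "0 < \<delta>" and "\<delta> < 1" and "l \<in> G \<delta>" and "norm A \<le> 1"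
  shows "norm ((opscale (of_real \<delta>) A - opscale (l / 2) id_blinfun) o\<^sub>L resolvent (l / 2) A) < 1"
proof -
  define c where "c = min (min (1 - (cmod (l / 2))\<^sup>2) (1 + \<delta>\<^sup>2 - 2 * (cmod (l / 2))\<^sup>2))
    (1 - \<delta>\<^sup>2 - 2 * cmod (l / 2 - of_real \<delta> * cnj (l / 2)))"
  have "0 < c"
    unfolding c_def using assms(1-3) by (rule norm_sq_gap_pos_of_mem_G)
  have gap: "(norm (scaleC (of_real \<delta>) (A y) - scaleC (l / 2) y))\<^sup>2 + c * (norm y)\<^sup>2
      \<le> (norm (y - scaleC (l / 2) (A y)))\<^sup>2" for y
    unfolding c_def using assms(4) by (rule norm_sq_gap)
  have \<mu>: "cmod (l / 2) * norm A < 1"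
    by (rule norm_half_mult_lt_1_of_mem_G[OF assms])
  have bound: "norm (y - scaleC (l / 2) (A y)) \<le> 2 * norm y" for y
  proof -
    have "norm (scaleC (l / 2) (A y)) \<le> cmod (l / 2) * norm A * norm y"
      unfolding norm_scaleC mult.assoc by (intro mult_left_mono norm_blinfun) simp
    also have "\<dots> \<le> norm y"
      using mult_right_mono[OF less_imp_le[OF \<mu>] norm_ge_zero[of y]] by simp
    finally show ?thesis
      using norm_triangle_ineq4[of y "scaleC (l / 2) (A y)"] by linarith
  qed
  show ?thesis
  proof (rule norm_compose_lt_1_if_gap[where b = 2 and c = c])
    show "(id_blinfun - opscale (l / 2) A) o\<^sub>L resolvent (l / 2) A = id_blinfun"
      by (rule resolvent_inverse(2)[OF \<mu>])
    show "norm ((id_blinfun - opscale (l / 2) A) y) \<le> 2 * norm y" for y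
      using bound[of y] by (simp add: blinfun.diff_left)
    show "(norm ((opscale (of_real \<delta>) A - opscale (l / 2) id_blinfun) y))\<^sup>2 + c * (norm y)\<^sup>2
        \<le> (norm ((id_blinfun - opscale (l / 2) A) y))\<^sup>2" for y
      using gap[of y] by (simp add: blinfun.diff_left)
  qed (use \<open>0 < c\<close> in simp_all)
qed

section \<open>Holomorphy\<close>

lemma compose_resolvent_diff:
  fixes A :: "'a::chilbert \<Rightarrow>\<^sub>L 'a" and d :: complex
  assumes "is_cbounded A" and \<mu>: "cmod \<mu> * norm A < 1" and \<nu>: "cmod \<nu> * norm A < 1"
  defines "E \<equiv> \<lambda>\<mu>. opscale d A - opscale \<mu> id_blinfun"
  shows "(E \<mu> o\<^sub>L resolvent \<mu> A) - (E \<nu> o\<^sub>L resolvent \<nu> A)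
    = opscale (\<mu> - \<nu>) ((E \<nu> o\<^sub>L resolvent \<mu> A o\<^sub>L A o\<^sub>L resolvent \<nu> A) - resolvent \<mu> A)"
proof (rule blinfun_eqI)
  fix x
  define r where "r = resolvent \<nu> A x"
  define s where "s = resolvent \<mu> A (A r)"
  have "resolvent \<mu> A x = r + scaleC (\<mu> - \<nu>) s"
    using arg_cong[OF resolvent_diff[OF assms(1) \<mu> \<nu>], of "\<lambda>F. F x"]
    by (simp add: minus_blinfun.rep_eq r_def s_def algebra_simps)
  moreover have "is_cbounded (E \<nu>)"
    unfolding E_def by (intro is_cbounded_diff is_cbounded_opscale is_cbounded_id assms(1))
  ultimately have "E \<nu> (resolvent \<mu> A x) = E \<nu> r + scaleC (\<mu> - \<nu>) (E \<nu> s)"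
    by (simp add: blinfun.add_right is_cbounded_def)
  moreover have "E \<mu> v = E \<nu> v - scaleC (\<mu> - \<nu>) v" for v
    by (simp add: E_def minus_blinfun.rep_eq complex_vs.scale_left_diff_distrib)
  ultimately show "((E \<mu> o\<^sub>L resolvent \<mu> A) - (E \<nu> o\<^sub>L resolvent \<nu> A)) x
      = opscale (\<mu> - \<nu>) ((E \<nu> o\<^sub>L resolvent \<mu> A o\<^sub>L A o\<^sub>L resolvent \<nu> A) - resolvent \<mu> A) x"
    by (simp add: minus_blinfun.rep_eq r_def[symmetric] s_def[symmetric]
        complex_vs.scale_right_diff_distrib)
qed

lemma difference_quotient_compose_resolvent:
  fixes A :: "'a::chilbert \<Rightarrow>\<^sub>L 'a" and d :: complex
  assumes "is_cbounded A" and "cmod (w / 2) * norm A < 1" and "cmod (z / 2) * norm A < 1"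
    and "w \<noteq> z"
  shows "opscale (inverse (w - z))
      (((opscale d A - opscale (w / 2) id_blinfun) o\<^sub>L resolvent (w / 2) A)
        - ((opscale d A - opscale (z / 2) id_blinfun) o\<^sub>L resolvent (z / 2) A))
    = scaleR (1 / 2) (((opscale d A - opscale (z / 2) id_blinfun) o\<^sub>L resolvent (w / 2) A
        o\<^sub>L A o\<^sub>L resolvent (z / 2) A) - resolvent (w / 2) A)"
proof -
  have "inverse (w - z) * (w / 2 - z / 2) = of_real (1 / 2)"
    using assms(4) by (simp add: field_simps)
  then show ?thesis
    by (simp only: compose_resolvent_diff[OF assms(1-3)] opscale_opscale opscale_of_real)
qed

lemma op_holomorphic_on_compose_resolvent:
  fixes A :: "'a::chilbert \<Rightarrow>\<^sub>L 'a"
  assumes "is_cbounded A" and S: "\<And>l. l \<in> S \<Longrightarrow> cmod (l / 2) * norm A < 1"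
  shows "op_holomorphic_on (\<lambda>l. (opscale d A - opscale (l / 2) id_blinfun) o\<^sub>L resolvent (l / 2) A) S"
  unfolding op_holomorphic_on_def
proof
  fix z
  assume "z \<in> S"
  define R where "R w = resolvent (w / 2) A" for w
  define D where "D w = scaleR (1 / 2)
    (((opscale d A - opscale (z / 2) id_blinfun) o\<^sub>L R w o\<^sub>L A o\<^sub>L R z) - R w)" for w
  have z: "cmod (z / 2) * norm A < 1"
    using S[OF \<open>z \<in> S\<close>] .
  have "((\<lambda>w. cmod (w / 2) * norm A) \<longlongrightarrow> cmod (z / 2) * norm A) (at z)"
    by (intro tendsto_intros) simp
  then have "eventually (\<lambda>w. cmod (w / 2) * norm A < 1) (at z)"
    using z by (rule order_tendstoD(2))
  moreover have "eventually (\<lambda>w. w \<noteq> z) (at z)"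
    by (rule eventually_neq_at_within)
  ultimately have "eventually (\<lambda>w. D w = opscale (inverse (w - z))
      (((opscale d A - opscale (w / 2) id_blinfun) o\<^sub>L resolvent (w / 2) A)
        - ((opscale d A - opscale (z / 2) id_blinfun) o\<^sub>L resolvent (z / 2) A))) (at z)"
  proof eventually_elim
    case (elim w)
    show ?case
      unfolding D_def R_def
      using difference_quotient_compose_resolvent[OF assms(1) elim(1) z elim(2)] by (rule sym)
  qed
  moreover have "(D \<longlongrightarrow> D z) (at z)"
  proof -
    have "((\<lambda>w. w / 2) \<longlongrightarrow> z / 2) (at z)"
      by (intro tendsto_intros) simp
    with isCont_resolvent[OF assms(1) z] have "(R \<longlongrightarrow> R z) (at z)"
      unfolding R_def[abs_def] by (rule isCont_tendsto_compose)
    then show ?thesis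
      unfolding D_def[abs_def]
      by (intro tendsto_intros bounded_bilinear.tendsto[OF bounded_bilinear_blinfun_compose])
  qed
  ultimately show "\<exists>D. ((\<lambda>w. opscale (inverse (w - z))
      (((opscale d A - opscale (w / 2) id_blinfun) o\<^sub>L resolvent (w / 2) A)
        - ((opscale d A - opscale (z / 2) id_blinfun) o\<^sub>L resolvent (z / 2) A))) \<longlongrightarrow> D) (at z)"
    by (intro exI) (rule Lim_transform_eventually[rotated])
qed

theorem lemma2p7:
  fixes \<delta> :: real
  assumes "0 < \<delta>" and "\<delta> < 1"
  shows "(\<forall>l\<in>G \<delta>. \<forall>T :: 'a::chilbert \<Rightarrow>\<^sub>L 'a. is_contraction T \<longrightarrow>
            op_invertible (id_blinfun - opscale (l / 2) (adj T)) \<and>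
            is_cbounded (lamT \<delta> l T) \<and> norm (lamT \<delta> l T) < 1)
       \<and> (\<forall>T :: 'a \<Rightarrow>\<^sub>L 'a. is_contraction T \<longrightarrow>
            op_holomorphic_on (\<lambda>l. lamT \<delta> l T) (G \<delta>))"
proof (intro conjI ballI allI impI)
  fix T :: "'a \<Rightarrow>\<^sub>L 'a" and l
  assume "is_contraction T" and "l \<in> G \<delta>"
  then have A: "is_cbounded (adj T)" and "norm (adj T) \<le> 1"
    using is_contraction_adj unfolding is_contraction_def by blast+
  then have \<mu>: "cmod (l / 2) * norm (adj T) < 1"
    using assms \<open>l \<in> G \<delta>\<close> by (intro norm_half_mult_lt_1_of_mem_G)
  show "op_invertible (id_blinfun - opscale (l / 2) (adj T))"
    using \<mu> by (rule op_invertible_id_minus_opscale)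
  show "is_cbounded (lamT \<delta> l T)"
    unfolding lamT_def
    by (intro is_cbounded_compose is_cbounded_diff is_cbounded_opscale is_cbounded_id A
        is_cbounded_resolvent \<mu>)
  show "norm (lamT \<delta> l T) < 1"
    unfolding lamT_def using assms \<open>l \<in> G \<delta>\<close> \<open>norm (adj T) \<le> 1\<close> by (rule norm_compose_resolvent_lt_1)
next
  fix T :: "'a \<Rightarrow>\<^sub>L 'a"
  assume "is_contraction T"
  then have A: "is_cbounded (adj T)" and "norm (adj T) \<le> 1"
    using is_contraction_adj unfolding is_contraction_def by blast+
  show "op_holomorphic_on (\<lambda>l. lamT \<delta> l T) (G \<delta>)"
    unfolding lamT_def using A
  proof (rule op_holomorphic_on_compose_resolvent)
    show "cmod (l / 2) * norm (adj T) < 1" if "l \<in> G \<delta>" for l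
      using assms that \<open>norm (adj T) \<le> 1\<close> by (rule norm_half_mult_lt_1_of_mem_G)
  qed
qed

end
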